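(* Let $\Gamma$ be a finite group and let $\alpha_1,\dots,\alpha_l$ be the (pairwise inequivalent) irreducible unitary representations of $\Gamma$ of dimension greater than one, $\alpha_k$ acting on $\mathbb{C}^{n_k}$. For $\boldsymbol{\xi}=(\xi_1,\dots,\xi_l)\in\prod_{k=1}^l S^{n_k-1}$ (each $\xi_k$ a unit vector in $\mathbb{C}^{n_k}$) set $T_{\boldsymbol\xi}(g)=\sum_{k=1}^l\langle\xi_k,\alpha_k(g)\xi_k\rangle$, and for $g,h\in\Gamma$ let $V_{g,h}=\{\boldsymbol\xi\in\prod_k S^{n_k-1}:T_{\boldsymbol\xi}(g)=T_{\boldsymbol\xi}(h)\}$. If $g\neq h$ and at least one of $g,h$ is not central in $\Gamma$, then $V_{g,h}$ is nowhere dense; that is, for almost all choices of $\boldsymbol\xi$ we have $T_{\boldsymbol\xi}(g)\neq T_{\boldsymbol\xi}(h)$.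
   Context: $S^{n_k-1}$ denotes the unit sphere of $\mathbb{C}^{n_k}$, regarded as a real algebraic variety; "almost all" refers to the product of the rotation-invariant probability measures (a nowhere dense real algebraic subset of the irreducible variety $\prod_k S^{n_k-1}$ has measure zero). *)

theory Defs
  imports "HOL-Analysis.Analysis" "HOL-Algebra.Group"
begin

text \<open>Vectors of length n and n x n matrices over the complex numbers are encoded as
functions nat => complex and nat => nat => complex, vanishing outside the index range.\<close>

definition is_vec :: "nat \<Rightarrow> (nat \<Rightarrow> complex) \<Rightarrow> bool" where
  "is_vec n v \<longleftrightarrow> (\<forall>i. n \<le> i \<longrightarrow> v i = 0)"

definition is_mat :: "nat \<Rightarrow> (nat \<Rightarrow> nat \<Rightarrow> complex) \<Rightarrow> bool" where
  "is_mat n A \<longleftrightarrow> (\<forall>i j. (n \<le> i \<or> n \<le> j) \<longrightarrow> A i j = 0)"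

definition mat_mul :: "nat \<Rightarrow> (nat \<Rightarrow> nat \<Rightarrow> complex) \<Rightarrow> (nat \<Rightarrow> nat \<Rightarrow> complex) \<Rightarrow> nat \<Rightarrow> nat \<Rightarrow> complex" where
  "mat_mul n A B = (\<lambda>i j. if i < n \<and> j < n then (\<Sum>m<n. A i m * B m j) else 0)"

definition id_mat :: "nat \<Rightarrow> nat \<Rightarrow> nat \<Rightarrow> complex" where
  "id_mat n = (\<lambda>i j. if i < n \<and> j < n \<and> i = j then 1 else 0)"

definition adj_mat :: "nat \<Rightarrow> (nat \<Rightarrow> nat \<Rightarrow> complex) \<Rightarrow> nat \<Rightarrow> nat \<Rightarrow> complex" where
  "adj_mat n A = (\<lambda>i j. if i < n \<and> j < n then cnj (A j i) else 0)"

definition mat_vec :: "nat \<Rightarrow> (nat \<Rightarrow> nat \<Rightarrow> complex) \<Rightarrow> (nat \<Rightarrow> complex) \<Rightarrow> nat \<Rightarrow> complex" where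
  "mat_vec n A v = (\<lambda>i. if i < n then (\<Sum>j<n. A i j * v j) else 0)"

definition cinner :: "nat \<Rightarrow> (nat \<Rightarrow> complex) \<Rightarrow> (nat \<Rightarrow> complex) \<Rightarrow> complex" where
  "cinner n u v = (\<Sum>i<n. cnj (u i) * v i)"

definition unitary_rep :: "('a, 'b) monoid_scheme \<Rightarrow> nat \<Rightarrow> ('a \<Rightarrow> nat \<Rightarrow> nat \<Rightarrow> complex) \<Rightarrow> bool" where
  "unitary_rep G n \<rho> \<longleftrightarrow>
     (\<forall>g\<in>carrier G. is_mat n (\<rho> g)) \<and>
     (\<forall>g\<in>carrier G. \<forall>h\<in>carrier G. \<rho> (g \<otimes>\<^bsub>G\<^esub> h) = mat_mul n (\<rho> g) (\<rho> h)) \<and>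
     \<rho> \<one>\<^bsub>G\<^esub> = id_mat n \<and>
     (\<forall>g\<in>carrier G. mat_mul n (\<rho> g) (adj_mat n (\<rho> g)) = id_mat n)"

definition invariant_subspace :: "('a, 'b) monoid_scheme \<Rightarrow> nat \<Rightarrow> ('a \<Rightarrow> nat \<Rightarrow> nat \<Rightarrow> complex) \<Rightarrow> (nat \<Rightarrow> complex) set \<Rightarrow> bool" where
  "invariant_subspace G n \<rho> W \<longleftrightarrow>
     W \<subseteq> {v. is_vec n v} \<and> (\<lambda>_. 0) \<in> W \<and>
     (\<forall>u\<in>W. \<forall>v\<in>W. (\<lambda>i. u i + v i) \<in> W) \<and>
     (\<forall>c::complex. \<forall>v\<in>W. (\<lambda>i. c * v i) \<in> W) \<and>
     (\<forall>g\<in>carrier G. \<forall>v\<in>W. mat_vec n (\<rho> g) v \<in> W)"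

definition irreducible_unitary_rep :: "('a, 'b) monoid_scheme \<Rightarrow> nat \<Rightarrow> ('a \<Rightarrow> nat \<Rightarrow> nat \<Rightarrow> complex) \<Rightarrow> bool" where
  "irreducible_unitary_rep G n \<rho> \<longleftrightarrow>
     unitary_rep G n \<rho> \<and> 1 \<le> n \<and>
     (\<forall>W. invariant_subspace G n \<rho> W \<longrightarrow> W = {\<lambda>_. 0} \<or> W = {v. is_vec n v})"

definition equivalent_reps :: "('a, 'b) monoid_scheme \<Rightarrow> nat \<Rightarrow> ('a \<Rightarrow> nat \<Rightarrow> nat \<Rightarrow> complex) \<Rightarrow> nat \<Rightarrow> ('a \<Rightarrow> nat \<Rightarrow> nat \<Rightarrow> complex) \<Rightarrow> bool" where
  "equivalent_reps G n \<rho> m \<sigma> \<longleftrightarrow> n = m \<and>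
     (\<exists>P Q. is_mat n P \<and> is_mat n Q \<and> mat_mul n P Q = id_mat n \<and> mat_mul n Q P = id_mat n \<and>
        (\<forall>g\<in>carrier G. mat_mul n P (\<rho> g) = mat_mul n (\<sigma> g) P))"

definition central :: "('a, 'b) monoid_scheme \<Rightarrow> 'a \<Rightarrow> bool" where
  "central G g \<longleftrightarrow> g \<in> carrier G \<and> (\<forall>x\<in>carrier G. g \<otimes>\<^bsub>G\<^esub> x = x \<otimes>\<^bsub>G\<^esub> g)"

definition sphere_prod :: "nat \<Rightarrow> (nat \<Rightarrow> nat) \<Rightarrow> (nat \<Rightarrow> nat \<Rightarrow> complex) set" where
  "sphere_prod l n = {\<xi>. (\<forall>k. l \<le> k \<longrightarrow> \<xi> k = (\<lambda>_. 0)) \<and>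
      (\<forall>k<l. is_vec (n k) (\<xi> k) \<and> (\<Sum>i<n k. (cmod (\<xi> k i))\<^sup>2) = 1)}"

definition T_xi :: "nat \<Rightarrow> (nat \<Rightarrow> nat) \<Rightarrow> (nat \<Rightarrow> 'a \<Rightarrow> nat \<Rightarrow> nat \<Rightarrow> complex) \<Rightarrow> (nat \<Rightarrow> nat \<Rightarrow> complex) \<Rightarrow> 'a \<Rightarrow> complex" where
  "T_xi l n \<alpha> \<xi> g = (\<Sum>k<l. cinner (n k) (\<xi> k) (mat_vec (n k) (\<alpha> k g) (\<xi> k)))"

definition V_set :: "nat \<Rightarrow> (nat \<Rightarrow> nat) \<Rightarrow> (nat \<Rightarrow> 'a \<Rightarrow> nat \<Rightarrow> nat \<Rightarrow> complex) \<Rightarrow> 'a \<Rightarrow> 'a \<Rightarrow> (nat \<Rightarrow> nat \<Rightarrow> complex) set" where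
  "V_set l n \<alpha> g h = {\<xi> \<in> sphere_prod l n. T_xi l n \<alpha> \<xi> g = T_xi l n \<alpha> \<xi> h}"

text \<open>The type nat => nat => complex carries the product topology, which on sphere_prod l n
(only finitely many nonzero coordinates) is the usual Euclidean topology.\<close>
definition nowhere_dense_in :: "'x::topological_space set \<Rightarrow> 'x set \<Rightarrow> bool" where
  "nowhere_dense_in S V \<longleftrightarrow> (top_of_set S) interior_of ((top_of_set S) closure_of V) = {}"

end

theory Submission
  imports Defs "HOL-Computational_Algebra.Polynomial"
begin

text \<open>
  The set \<open>V\<^sub>g\<^sub>,\<^sub>h\<close> is closed, so if it were not nowhere dense it would contain a relatively
  open piece of the product of spheres. Varying one factor \<open>\<xi>\<^sub>k\<close> at a time, the quadratic form
  \<open>\<langle>\<xi>, (\<alpha>\<^sub>k g - \<alpha>\<^sub>k h) \<xi>\<rangle>\<close> is then constant on an open subset of the unit sphere of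
  \<open>\<complex>^(n k)\<close>; restricting it to lines \<open>x + t w\<close> and comparing coefficients of \<open>t\<^sup>2\<close>, followed by
  polarization, shows that \<open>\<alpha>\<^sub>k g - \<alpha>\<^sub>k h\<close> is a scalar. Every irreducible unitary
  representation \<open>\<sigma>\<close> of dimension greater than one is equivalent to some \<open>\<alpha>\<^sub>k\<close>, and in dimension
  one everything commutes, so \<open>\<sigma> g - \<sigma> h\<close> commutes with every \<open>\<sigma> x\<close>. Hence the group algebra
  element \<open>xg - xh - gx + hx\<close> acts as zero in every irreducible representation and therefore
  vanishes: the left regular representation is faithful on the group algebra, and splitting off
  orthogonal complements of invariant subspaces reduces it to irreducible pieces. As
  \<open>xg \<noteq> xh\<close>, this forces \<open>xg = gx\<close> and then \<open>hx = xh\<close>, i.e. \<open>g\<close> and \<open>h\<close> are central.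
\<close>

section \<open>Vectors and matrices\<close>

lemma is_vec_mat_vec [simp]: "is_vec n (mat_vec n A v)"
  by (simp add: is_vec_def mat_vec_def)

lemma mat_vec_dim_0 [simp]: "mat_vec 0 A v = (\<lambda>_. 0)"
  by (simp add: mat_vec_def)

lemma cinner_add_right: "cinner n u (\<lambda>i. v i + w i) = cinner n u v + cinner n u w"
  by (simp add: cinner_def algebra_simps sum.distrib)

lemma cinner_diff_right: "cinner n u (\<lambda>i. v i - w i) = cinner n u v - cinner n u w"
  by (simp add: cinner_def algebra_simps sum_subtractf)

lemma cinner_add_left: "cinner n (\<lambda>i. v i + w i) u = cinner n v u + cinner n w u"
  by (simp add: cinner_def algebra_simps sum.distrib)

lemma cinner_scale_right: "cinner n u (\<lambda>i. c * v i) = c * cinner n u v"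
  by (simp add: cinner_def algebra_simps sum_distrib_left)

lemma cinner_scale_left: "cinner n (\<lambda>i. c * v i) u = cnj c * cinner n v u"
  by (simp add: cinner_def algebra_simps sum_distrib_left)

lemma cinner_sum_right: "cinner n u (\<lambda>i. \<Sum>j\<in>J. f j i) = (\<Sum>j\<in>J. cinner n u (f j))"
  unfolding cinner_def by (simp add: sum_distrib_left) (rule sum.swap)

lemma cinner_sum_left: "cinner n (\<lambda>i. \<Sum>j\<in>J. f j i) u = (\<Sum>j\<in>J. cinner n (f j) u)"
  unfolding cinner_def by (simp add: sum_distrib_right cnj_sum) (rule sum.swap)

lemma cnj_cinner: "cnj (cinner n u v) = cinner n v u"
  by (simp add: cinner_def cnj_sum mult.commute)

lemma cinner_zero_right [simp]: "cinner n u (\<lambda>_. 0) = 0"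
  by (simp add: cinner_def)

lemma cinner_self: "cinner n v v = of_real (\<Sum>i<n. (cmod (v i))\<^sup>2)"
  unfolding cinner_def by (simp add: complex_norm_square[symmetric] mult.commute)

lemma cinner_self_eq_0:
  assumes "is_vec n v" and "cinner n v v = 0"
  shows "v = (\<lambda>_. 0)"
proof
  fix i
  have "(\<Sum>i<n. (cmod (v i))\<^sup>2) = 0"
    using assms(2) by (simp only: cinner_self of_real_eq_0_iff)
  then have "\<forall>i<n. (cmod (v i))\<^sup>2 = 0"
    by (subst (asm) sum_nonneg_eq_0_iff) auto
  then show "v i = 0"
    using assms(1) unfolding is_vec_def by (cases "i < n") auto
qed

lemma cinner_Suc_dim:
  assumes "is_vec m u"
  shows "cinner (Suc m) u v = cinner m u v"
  using assms by (simp add: cinner_def is_vec_def)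

lemma mat_vec_add: "mat_vec n A (\<lambda>i. u i + v i) = (\<lambda>i. mat_vec n A u i + mat_vec n A v i)"
  by (auto simp: mat_vec_def algebra_simps sum.distrib)

lemma mat_vec_diff: "mat_vec n A (\<lambda>i. u i - v i) = (\<lambda>i. mat_vec n A u i - mat_vec n A v i)"
  by (auto simp: mat_vec_def algebra_simps sum_subtractf)

lemma mat_vec_scale: "mat_vec n A (\<lambda>i. c * v i) = (\<lambda>i. c * mat_vec n A v i)"
  by (auto simp: mat_vec_def algebra_simps sum_distrib_left)

lemma mat_vec_sum: "mat_vec n A (\<lambda>i. \<Sum>j\<in>J. f j i) = (\<lambda>i. \<Sum>j\<in>J. mat_vec n A (f j) i)"
proof
  fix i
  show "mat_vec n A (\<lambda>i. \<Sum>j\<in>J. f j i) i = (\<Sum>j\<in>J. mat_vec n A (f j) i)"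
    by (cases "i < n") (auto simp: mat_vec_def sum_distrib_left intro: sum.swap)
qed

lemma mat_vec_mat_diff:
  "mat_vec n (\<lambda>i j. A i j - B i j) v = (\<lambda>i. mat_vec n A v i - mat_vec n B v i)"
  by (auto simp: mat_vec_def algebra_simps sum_subtractf)

lemma mat_vec_mat_scale: "mat_vec n (\<lambda>i j. c * A i j) v = (\<lambda>i. c * mat_vec n A v i)"
  by (auto simp: mat_vec_def algebra_simps sum_distrib_left)

lemma mat_vec_mat_mul: "mat_vec n (mat_mul n A B) v = mat_vec n A (mat_vec n B v)"
proof
  fix i
  show "mat_vec n (mat_mul n A B) v i = mat_vec n A (mat_vec n B v) i"
  proof (cases "i < n")
    case True
    have "mat_vec n (mat_mul n A B) v i = (\<Sum>j<n. (\<Sum>m<n. A i m * B m j) * v j)"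
      using True by (simp add: mat_vec_def mat_mul_def)
    also have "\<dots> = (\<Sum>m<n. A i m * (\<Sum>j<n. B m j * v j))"
      by (simp add: sum_distrib_left sum_distrib_right mult.assoc) (rule sum.swap)
    also have "\<dots> = mat_vec n A (mat_vec n B v) i"
      using True by (simp add: mat_vec_def)
    finally show ?thesis .
  qed (simp add: mat_vec_def)
qed

lemma mat_vec_id_mat: "is_vec n v \<Longrightarrow> mat_vec n (id_mat n) v = v"
  by (auto simp: mat_vec_def id_mat_def is_vec_def if_distrib[of "\<lambda>x. x * _"] cong: if_cong)

lemma cinner_mat_vec_adj:
  "cinner n (mat_vec n A u) w = cinner n u (mat_vec n (adj_mat n A) w)"
proof -
  have "cinner n (mat_vec n A u) w = (\<Sum>i<n. \<Sum>j<n. cnj (A i j) * cnj (u j) * w i)"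
    by (simp add: cinner_def mat_vec_def cnj_sum sum_distrib_right)
  also have "\<dots> = (\<Sum>j<n. \<Sum>i<n. cnj (u j) * (cnj (A i j) * w i))"
    by (subst sum.swap) (simp add: algebra_simps)
  also have "\<dots> = cinner n u (mat_vec n (adj_mat n A) w)"
    by (simp add: cinner_def mat_vec_def adj_mat_def sum_distrib_left)
  finally show ?thesis .
qed

lemma mat_vec_eq_0_if_quadratic_form_eq_0:
  assumes form0: "\<And>v. is_vec n v \<Longrightarrow> cinner n v (mat_vec n A v) = 0" and v: "is_vec n v"
  shows "mat_vec n A v = (\<lambda>_. 0)"
proof -
  have sym: "cinner n u (mat_vec n A w) + cinner n w (mat_vec n A u) = 0"
    if "is_vec n u" "is_vec n w" for u w
  proof -
    have "is_vec n (\<lambda>i. u i + w i)" using that by (simp add: is_vec_def)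
    from form0[OF this] form0[OF that(1)] form0[OF that(2)] show ?thesis
      by (simp add: mat_vec_add cinner_add_left cinner_add_right)
  qed
  have bilinear0: "cinner n u (mat_vec n A w) = 0" if u: "is_vec n u" and w: "is_vec n w" for u w
  proof -
    have "is_vec n (\<lambda>i. \<i> * w i)" using w by (simp add: is_vec_def)
    from sym[OF u this] have "\<i> * (cinner n u (mat_vec n A w) - cinner n w (mat_vec n A u)) = 0"
      by (simp add: mat_vec_scale cinner_scale_right cinner_scale_left right_diff_distrib)
    with sym[OF u w] show ?thesis by simp
  qed
  show ?thesis
    using bilinear0[OF is_vec_mat_vec v] cinner_self_eq_0[OF is_vec_mat_vec] by blast
qed

section \<open>Orthonormal bases of subspaces\<close>

definition csubspace :: "nat \<Rightarrow> (nat \<Rightarrow> complex) set \<Rightarrow> bool" where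
  "csubspace m X \<longleftrightarrow> X \<subseteq> {v. is_vec m v} \<and> (\<lambda>_. 0) \<in> X \<and>
     (\<forall>u\<in>X. \<forall>v\<in>X. (\<lambda>i. u i + v i) \<in> X) \<and> (\<forall>c. \<forall>v\<in>X. (\<lambda>i. c * v i) \<in> X)"

lemma csubspace_is_vec: "csubspace m X \<Longrightarrow> v \<in> X \<Longrightarrow> is_vec m v"
  by (auto simp: csubspace_def)

lemma csubspace_zero: "csubspace m X \<Longrightarrow> (\<lambda>_. 0) \<in> X"
  by (auto simp: csubspace_def)

lemma csubspace_add: "csubspace m X \<Longrightarrow> u \<in> X \<Longrightarrow> v \<in> X \<Longrightarrow> (\<lambda>i. u i + v i) \<in> X"
  by (auto simp: csubspace_def)

lemma csubspace_scale: "csubspace m X \<Longrightarrow> v \<in> X \<Longrightarrow> (\<lambda>i. c * v i) \<in> X"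
  by (auto simp: csubspace_def)

lemma csubspace_diff:
  assumes "csubspace m X" "u \<in> X" "v \<in> X"
  shows "(\<lambda>i. u i - v i) \<in> X"
  using csubspace_add[OF assms(1,2) csubspace_scale[OF assms(1,3), of "-1"]] by simp

lemma csubspace_sum:
  assumes "csubspace m X" "\<And>j. j \<in> J \<Longrightarrow> f j \<in> X"
  shows "(\<lambda>i. \<Sum>j\<in>J. f j i) \<in> X"
  using assms(2)
proof (induction J rule: infinite_finite_induct)
  case (insert x F)
  then have "(\<lambda>i. f x i + (\<Sum>j\<in>F. f j i)) \<in> X" using csubspace_add[OF assms(1)] by auto
  then show ?case using insert by simp
qed (use csubspace_zero[OF assms(1)] in auto)

definition orthonormal :: "nat \<Rightarrow> nat \<Rightarrow> (nat \<Rightarrow> nat \<Rightarrow> complex) \<Rightarrow> bool" where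
  "orthonormal m d u \<longleftrightarrow> (\<forall>i<d. \<forall>j<d. cinner m (u i) (u j) = (if i = j then 1 else 0))"

definition proj :: "nat \<Rightarrow> nat \<Rightarrow> (nat \<Rightarrow> nat \<Rightarrow> complex) \<Rightarrow> (nat \<Rightarrow> complex) \<Rightarrow> nat \<Rightarrow> complex" where
  "proj m d u v = (\<lambda>t. \<Sum>i<d. cinner m (u i) v * u i t)"

definition onb :: "nat \<Rightarrow> (nat \<Rightarrow> complex) set \<Rightarrow> nat \<Rightarrow> (nat \<Rightarrow> nat \<Rightarrow> complex) \<Rightarrow> bool" where
  "onb m X d u \<longleftrightarrow> (\<forall>i<d. u i \<in> X) \<and> orthonormal m d u \<and> (\<forall>v\<in>X. proj m d u v = v)"

lemma cinner_proj_right: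
  assumes "orthonormal m d u" "i < d"
  shows "cinner m (u i) (proj m d u v) = cinner m (u i) v"
proof -
  have "cinner m (u i) (proj m d u v) = (\<Sum>j<d. cinner m (u j) v * cinner m (u i) (u j))"
    by (simp add: proj_def cinner_sum_right cinner_scale_right)
  also have "\<dots> = (\<Sum>j<d. if j = i then cinner m (u j) v else 0)"
    using assms by (intro sum.cong) (auto simp: orthonormal_def)
  finally show ?thesis using assms(2) by simp
qed

lemma cinner_proj_left:
  "cinner m (proj m d u v) w = (\<Sum>i<d. cnj (cinner m (u i) v) * cinner m (u i) w)"
  by (simp add: proj_def cinner_sum_left cinner_scale_left)

lemma proj_in_csubspace: "csubspace n X \<Longrightarrow> \<forall>i<d. u i \<in> X \<Longrightarrow> proj m d u v \<in> X"
  unfolding proj_def by (rule csubspace_sum) (auto intro: csubspace_scale)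

lemma onb_Suc_dim:
  assumes "onb m X d u" "X \<subseteq> {v. is_vec m v}"
  shows "onb (Suc m) X d u"
proof -
  have "cinner (Suc m) (u i) v = cinner m (u i) v" if "i < d" for i v
    using assms that by (intro cinner_Suc_dim) (auto simp: onb_def)
  then show ?thesis
    using assms(1) by (simp add: onb_def orthonormal_def proj_def)
qed

lemma onb_insert:
  assumes B: "onb m X d u" and XY: "X \<subseteq> Y"
    and e: "e \<in> Y" "cinner m e e = 1" "\<forall>i<d. cinner m (u i) e = 0"
    and split: "\<forall>v\<in>Y. \<exists>a. (\<lambda>t. v t - a * e t) \<in> X"
  shows "onb m Y (Suc d) (u(d := e))"
proof -
  have uX: "\<forall>i<d. u i \<in> X" and ortho: "orthonormal m d u" and expand: "\<forall>v\<in>X. proj m d u v = v"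
    using B by (auto simp: onb_def)
  have eu: "cinner m e (u i) = 0" if "i < d" for i
    using e(3) that cnj_cinner[of m "u i" e] by simp
  have "orthonormal m (Suc d) (u(d := e))"
    using ortho e(2,3) eu by (auto simp: orthonormal_def less_Suc_eq)
  moreover have "proj m (Suc d) (u(d := e)) v = v" if v: "v \<in> Y" for v
  proof -
    obtain a where v': "(\<lambda>t. v t - a * e t) \<in> X" (is "?v' \<in> X") using split v by blast
    have same_coeffs: "cinner m (u i) v = cinner m (u i) ?v'" if "i < d" for i
      using e(3) that by (simp add: cinner_diff_right cinner_scale_right)
    have "proj m d u v = proj m d u ?v'"
      unfolding proj_def using same_coeffs by (intro ext sum.cong) auto
    also have "\<dots> = ?v'" using expand v' by blast
    finally have proj_v: "proj m d u v = ?v'" .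
    have "cinner m e ?v' = cnj (cinner m (proj m d u ?v') e)"
      using expand v' by (simp add: cnj_cinner)
    also have "\<dots> = 0"
      unfolding cinner_proj_left using e(3) by simp
    finally have "cinner m e v = a"
      using e(2) by (simp add: cinner_diff_right cinner_scale_right)
    with proj_v show ?thesis by (simp add: proj_def fun_eq_iff)
  qed
  ultimately show ?thesis using uX XY e(1) by (auto simp: onb_def less_Suc_eq)
qed

definition normalize_vec :: "nat \<Rightarrow> (nat \<Rightarrow> complex) \<Rightarrow> nat \<Rightarrow> complex" where
  "normalize_vec m v = (\<lambda>i. of_real (1 / sqrt (\<Sum>j<m. (cmod (v j))\<^sup>2)) * v i)"

lemma sum_cmod_sq_normalize_vec:
  assumes "(\<Sum>j<m. (cmod (v j))\<^sup>2) \<noteq> 0" (is "?S \<noteq> 0")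
  shows "(\<Sum>i<m. (cmod (normalize_vec m v i))\<^sup>2) = 1"
proof -
  have "0 < ?S" using assms by (simp add: order_less_le sum_nonneg)
  then have "(cmod (normalize_vec m v i))\<^sup>2 = (cmod (v i))\<^sup>2 / ?S" for i
    by (simp add: normalize_vec_def norm_divide power_divide)
  then show ?thesis using assms by (simp add: sum_divide_distrib[symmetric])
qed

lemma cinner_normalize_vec:
  assumes "is_vec m v" "v \<noteq> (\<lambda>_. 0)"
  shows "cinner m (normalize_vec m v) (normalize_vec m v) = 1"
proof -
  have "cinner m v v \<noteq> 0" using assms cinner_self_eq_0 by blast
  then have "(\<Sum>j<m. (cmod (v j))\<^sup>2) \<noteq> 0" by (auto simp only: cinner_self of_real_0)
  from sum_cmod_sq_normalize_vec[OF this] show ?thesis by (simp only: cinner_self of_real_1)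
qed

lemma is_vec_Suc_last_0: "is_vec (Suc m) v \<Longrightarrow> v m = 0 \<Longrightarrow> is_vec m v"
  unfolding is_vec_def by (metis Suc_leI le_neq_implies_less)

lemma onb_extend_from_section:
  assumes X: "csubspace (Suc m) X" and B: "onb (Suc m) {v\<in>X. v m = 0} d u"
    and w: "w \<in> X" "w m \<noteq> 0"
  obtains e where "onb (Suc m) X (Suc d) (u(d := e))" "e \<in> X" "e m \<noteq> 0"
proof -
  define r where "r = (\<lambda>t. w t - proj (Suc m) d u w t)"
  define e where "e = normalize_vec (Suc m) r"
  have "proj (Suc m) d u w \<in> {v\<in>X. v m = 0}"
    using B X by (intro proj_in_csubspace[where n = "Suc m"]) (auto simp: onb_def csubspace_def)
  then have r: "r \<in> X" "r m \<noteq> 0"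
    using csubspace_diff[OF X w(1)] w(2) by (auto simp: r_def)
  have r_vec: "is_vec (Suc m) r" and r_nz: "r \<noteq> (\<lambda>_. 0)"
    using csubspace_is_vec[OF X r(1)] r(2) by auto
  then have "cinner (Suc m) r r \<noteq> 0" using cinner_self_eq_0 by blast
  then have "(\<Sum>j<Suc m. (cmod (r j))\<^sup>2) \<noteq> 0" by (auto simp only: cinner_self of_real_0)
  then have ee: "cinner (Suc m) e e = 1" "e m \<noteq> 0"
    using cinner_normalize_vec[OF r_vec r_nz] r(2) by (simp_all add: e_def normalize_vec_def)
  have eX: "e \<in> X" unfolding e_def normalize_vec_def by (rule csubspace_scale[OF X r(1)])
  have "\<forall>i<d. cinner (Suc m) (u i) r = 0"
    using B by (simp add: r_def cinner_diff_right cinner_proj_right onb_def)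
  then have ue: "\<forall>i<d. cinner (Suc m) (u i) e = 0"
    unfolding e_def normalize_vec_def cinner_scale_right by simp
  have "(\<lambda>t. z t - z m / e m * e t) \<in> {v\<in>X. v m = 0}" if "z \<in> X" for z
    using csubspace_diff[OF X that csubspace_scale[OF X eX, of "z m / e m"]] ee(2) by simp
  then have "\<forall>z\<in>X. \<exists>a. (\<lambda>t. z t - a * e t) \<in> {v\<in>X. v m = 0}" by blast
  then have "onb (Suc m) X (Suc d) (u(d := e))"
    using onb_insert[OF B _ eX ee(1) ue] by auto
  with that eX ee(2) show ?thesis by blast
qed

lemma csubspace_full_if_section_full:
  assumes X: "csubspace (Suc m) X" and section_full: "{v\<in>X. v m = 0} = {v. is_vec m v}"
    and e: "e \<in> X" "e m \<noteq> 0"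
  shows "X = {v. is_vec (Suc m) v}"
proof -
  have "z \<in> X" if z: "is_vec (Suc m) z" for z
  proof -
    let ?z' = "\<lambda>t. z t - z m / e m * e t"
    have "is_vec (Suc m) ?z'"
      using z csubspace_is_vec[OF X e(1)] by (simp add: is_vec_def)
    moreover have "?z' m = 0" using e(2) by simp
    ultimately have "?z' \<in> X" using section_full is_vec_Suc_last_0 by blast
    from csubspace_add[OF X this csubspace_scale[OF X e(1), of "z m / e m"]] show ?thesis by simp
  qed
  then show ?thesis using csubspace_is_vec[OF X] by auto
qed

lemma onb_exists:
  "csubspace m X \<Longrightarrow> \<exists>d u. onb m X d u \<and> d \<le> m \<and> (X \<noteq> {v. is_vec m v} \<longrightarrow> d < m)"
proof (induction m arbitrary: X)
  case 0
  have vec0: "is_vec 0 v \<longleftrightarrow> v = (\<lambda>_. 0)" for v by (auto simp: is_vec_def)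
  then have "X = {\<lambda>_. 0}" using csubspace_zero[OF 0] csubspace_is_vec[OF 0] by blast
  then have "X = {v. is_vec 0 v}" and "onb 0 X 0 u" for u
    by (auto simp: vec0 onb_def orthonormal_def proj_def)
  then show ?case by blast
next
  case (Suc m)
  note X = Suc.prems
  define X' where "X' = {v\<in>X. v m = 0}"
  have X'_vec: "X' \<subseteq> {v. is_vec m v}"
    using csubspace_is_vec[OF X] is_vec_Suc_last_0 by (auto simp: X'_def)
  have "csubspace m X'"
    using X'_vec csubspace_zero[OF X] csubspace_add[OF X] csubspace_scale[OF X]
    unfolding csubspace_def X'_def by simp
  then obtain d u where "onb m X' d u" and "d \<le> m" and d_less: "X' \<noteq> {v. is_vec m v} \<longrightarrow> d < m"
    using Suc.IH by blast
  then have B: "onb (Suc m) X' d u"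
    using X'_vec by (intro onb_Suc_dim)
  show ?case
  proof (cases "\<forall>v\<in>X. v m = 0")
    case True
    then have "X' = X" by (auto simp: X'_def)
    then show ?thesis using B \<open>d \<le> m\<close> by (intro exI[of _ d] exI[of _ u]) auto
  next
    case False
    then obtain w where "w \<in> X" "w m \<noteq> 0" by blast
    then obtain e where "onb (Suc m) X (Suc d) (u(d := e))" "e \<in> X" "e m \<noteq> 0"
      using onb_extend_from_section[OF X B[unfolded X'_def]] by blast
    then show ?thesis
      using \<open>d \<le> m\<close> d_less csubspace_full_if_section_full[OF X] unfolding X'_def by blast
  qed
qed

section \<open>Unitary representations and the group algebra\<close>

lemma unitary_rep_mult:
  "unitary_rep G m \<rho> \<Longrightarrow> y \<in> carrier G \<Longrightarrow> z \<in> carrier G \<Longrightarrow>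
    mat_vec m (\<rho> (y \<otimes>\<^bsub>G\<^esub> z)) v = mat_vec m (\<rho> y) (mat_vec m (\<rho> z) v)"
  by (simp add: unitary_rep_def mat_vec_mat_mul)

lemma unitary_rep_one: "unitary_rep G m \<rho> \<Longrightarrow> is_vec m v \<Longrightarrow> mat_vec m (\<rho> \<one>\<^bsub>G\<^esub>) v = v"
  by (simp add: unitary_rep_def mat_vec_id_mat)

lemma unitary_rep_adj:
  fixes G (structure)
  assumes "group G" "unitary_rep G m \<rho>" "y \<in> carrier G" "is_vec m v"
  shows "mat_vec m (adj_mat m (\<rho> y)) v = mat_vec m (\<rho> (inv y)) v"
proof -
  interpret group G by fact
  let ?w = "mat_vec m (adj_mat m (\<rho> y)) v"
  have "mat_vec m (\<rho> y) ?w = v"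
    using assms(2-4) by (simp add: mat_vec_mat_mul[symmetric] unitary_rep_def mat_vec_id_mat)
  then have "mat_vec m (\<rho> (inv y)) v = mat_vec m (\<rho> (inv y)) (mat_vec m (\<rho> y) ?w)"
    by simp
  also have "\<dots> = mat_vec m (\<rho> (inv y \<otimes> y)) ?w"
    by (rule unitary_rep_mult[OF assms(2) inv_closed assms(3), symmetric]) (rule assms(3))
  also have "\<dots> = ?w"
    using assms(2,3) by (simp add: unitary_rep_one)
  finally show ?thesis by simp
qed

lemma cinner_unitary_rep:
  fixes G (structure)
  assumes "group G" "unitary_rep G m \<rho>" "y \<in> carrier G" "is_vec m v"
  shows "cinner m w (mat_vec m (\<rho> y) v) = cinner m (mat_vec m (\<rho> (inv y)) w) v"
proof -
  interpret group G by fact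
  show ?thesis
    using unitary_rep_adj[OF assms(1,2) _ assms(4), of "inv y"] assms(3)
    by (simp add: cinner_mat_vec_adj)
qed

lemma invariant_subspace_csubspace: "invariant_subspace G m \<rho> X \<Longrightarrow> csubspace m X"
  by (simp add: invariant_subspace_def csubspace_def)

lemma invariant_subspace_mat_vec:
  "invariant_subspace G m \<rho> X \<Longrightarrow> y \<in> carrier G \<Longrightarrow> v \<in> X \<Longrightarrow> mat_vec m (\<rho> y) v \<in> X"
  by (simp add: invariant_subspace_def)

definition orth_compl :: "nat \<Rightarrow> (nat \<Rightarrow> complex) set \<Rightarrow> (nat \<Rightarrow> complex) set" where
  "orth_compl m W = {v. is_vec m v \<and> (\<forall>w\<in>W. cinner m w v = 0)}"

lemma invariant_subspace_orth_compl:
  fixes G (structure)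
  assumes G: "group G" and U: "unitary_rep G m \<rho>" and W: "invariant_subspace G m \<rho> W"
  shows "invariant_subspace G m \<rho> (orth_compl m W)"
  unfolding invariant_subspace_def
proof (intro conjI ballI allI subsetI)
  fix y v assume y: "y \<in> carrier G" and v: "v \<in> orth_compl m W"
  have "cinner m w (mat_vec m (\<rho> y) v) = 0" if "w \<in> W" for w
    using cinner_unitary_rep[OF G U y, of v w] v invariant_subspace_mat_vec[OF W _ that]
      group.inv_closed[OF G y] by (auto simp: orth_compl_def)
  then show "mat_vec m (\<rho> y) v \<in> orth_compl m W" by (simp add: orth_compl_def)
qed (auto simp: orth_compl_def cinner_add_right cinner_scale_right is_vec_def)

lemma residual_in_orth_compl:
  assumes W: "csubspace m W" and B: "onb m W d u" and v: "is_vec m v"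
  shows "(\<lambda>t. v t - proj m d u v t) \<in> orth_compl m W" (is "?q \<in> _")
proof -
  have "proj m d u v \<in> W" using B by (intro proj_in_csubspace[OF W]) (simp add: onb_def)
  then have "is_vec m ?q" using v csubspace_is_vec[OF W] by (auto simp: is_vec_def)
  moreover have "cinner m w ?q = 0" if "w \<in> W" for w
  proof -
    have "\<forall>i<d. cinner m (u i) ?q = 0"
      using B by (simp add: cinner_diff_right cinner_proj_right onb_def)
    then have "cinner m (proj m d u w) ?q = 0" by (simp add: cinner_proj_left)
    then show ?thesis using B that by (simp add: onb_def)
  qed
  ultimately show ?thesis by (simp add: orth_compl_def)
qed

lemma orth_compl_proper:
  assumes "csubspace m W" "W \<noteq> {\<lambda>_. 0}"
  shows "orth_compl m W \<noteq> {v. is_vec m v}"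
proof
  assume full: "orth_compl m W = {v. is_vec m v}"
  have "w = (\<lambda>_. 0)" if "w \<in> W" for w
  proof -
    have "w \<in> orth_compl m W" using full csubspace_is_vec[OF assms(1) that] by blast
    then show ?thesis using that cinner_self_eq_0 by (auto simp: orth_compl_def)
  qed
  then show False using assms csubspace_zero by blast
qed

definition compress ::
  "nat \<Rightarrow> ('a \<Rightarrow> nat \<Rightarrow> nat \<Rightarrow> complex) \<Rightarrow> nat \<Rightarrow> (nat \<Rightarrow> nat \<Rightarrow> complex) \<Rightarrow> 'a \<Rightarrow> nat \<Rightarrow> nat \<Rightarrow> complex"
  where "compress m \<rho> d u = (\<lambda>y i j. if i < d \<and> j < d then cinner m (u i) (mat_vec m (\<rho> y) (u j)) else 0)"

lemma compress_mult:
  fixes G (structure)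
  assumes U: "unitary_rep G m \<rho>" and X: "invariant_subspace G m \<rho> X" and B: "onb m X d u"
    and y: "y \<in> carrier G" and z: "z \<in> carrier G"
  shows "compress m \<rho> d u (y \<otimes> z) = mat_mul d (compress m \<rho> d u y) (compress m \<rho> d u z)"
proof (intro ext)
  fix i j
  let ?r = "compress m \<rho> d u"
  show "?r (y \<otimes> z) i j = mat_mul d (?r y) (?r z) i j"
  proof (cases "i < d \<and> j < d")
    case True
    have "proj m d u (mat_vec m (\<rho> z) (u j)) = mat_vec m (\<rho> z) (u j)"
      using B True invariant_subspace_mat_vec[OF X z] by (simp add: onb_def)
    then have "?r (y \<otimes> z) i j = cinner m (u i) (mat_vec m (\<rho> y) (proj m d u (mat_vec m (\<rho> z) (u j))))"
      using True unitary_rep_mult[OF U y z] by (simp add: compress_def)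
    also have "\<dots> = mat_mul d (?r y) (?r z) i j"
      unfolding proj_def mat_vec_sum mat_vec_scale cinner_sum_right cinner_scale_right
      using True by (simp add: mat_mul_def compress_def mult.commute)
    finally show ?thesis .
  qed (auto simp: compress_def mat_mul_def)
qed

lemma adj_mat_compress:
  fixes G (structure)
  assumes "group G" "unitary_rep G m \<rho>" "y \<in> carrier G" "\<forall>i<d. is_vec m (u i)"
  shows "adj_mat d (compress m \<rho> d u y) = compress m \<rho> d u (inv y)"
proof (intro ext)
  fix i j
  show "adj_mat d (compress m \<rho> d u y) i j = compress m \<rho> d u (inv y) i j"
    using cinner_unitary_rep[OF assms(1-3), of "u i" "u j"] assms(4)
    by (auto simp: adj_mat_def compress_def cnj_cinner)
qed

lemma unitary_rep_compress:
  fixes G (structure)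
  assumes G: "group G" and U: "unitary_rep G m \<rho>" and X: "invariant_subspace G m \<rho> X"
    and B: "onb m X d u"
  shows "unitary_rep G d (compress m \<rho> d u)"
proof -
  interpret group G by fact
  let ?r = "compress m \<rho> d u"
  have u_vec: "\<forall>i<d. is_vec m (u i)"
    using B csubspace_is_vec[OF invariant_subspace_csubspace[OF X]] by (auto simp: onb_def)
  have one: "?r \<one> = id_mat d"
    using B u_vec by (intro ext) (auto simp: compress_def id_mat_def unitary_rep_one[OF U] onb_def orthonormal_def)
  have "mat_mul d (?r y) (adj_mat d (?r y)) = id_mat d" if "y \<in> carrier G" for y
    using adj_mat_compress[OF G U that u_vec] compress_mult[OF U X B that inv_closed[OF that]] one that
    by simp
  moreover have "is_mat d (?r y)" for y by (simp add: is_mat_def compress_def)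
  ultimately show ?thesis
    unfolding unitary_rep_def using compress_mult[OF U X B] one by blast
qed

definition group_alg_act ::
  "('a, 'b) monoid_scheme \<Rightarrow> nat \<Rightarrow> ('a \<Rightarrow> nat \<Rightarrow> nat \<Rightarrow> complex) \<Rightarrow> ('a \<Rightarrow> complex) \<Rightarrow> (nat \<Rightarrow> complex) \<Rightarrow> nat \<Rightarrow> complex"
  where "group_alg_act G m \<rho> \<beta> v = (\<lambda>i. \<Sum>y\<in>carrier G. \<beta> y * mat_vec m (\<rho> y) v i)"

lemma group_alg_act_add:
  "group_alg_act G m \<rho> \<beta> (\<lambda>i. u i + v i) = (\<lambda>i. group_alg_act G m \<rho> \<beta> u i + group_alg_act G m \<rho> \<beta> v i)"
  by (simp add: group_alg_act_def mat_vec_add algebra_simps sum.distrib)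

lemma group_alg_act_indicator:
  "finite (carrier G) \<Longrightarrow> a \<in> carrier G \<Longrightarrow>
    group_alg_act G m \<rho> (\<lambda>y. if y = a then 1 else 0) w = mat_vec m (\<rho> a) w"
  by (simp add: group_alg_act_def if_distrib[of "\<lambda>x. x * _"] cong: if_cong)

lemma group_alg_act_coeff_add:
  "group_alg_act G m \<rho> (\<lambda>y. \<beta> y + \<gamma> y) w = (\<lambda>i. group_alg_act G m \<rho> \<beta> w i + group_alg_act G m \<rho> \<gamma> w i)"
  by (simp add: group_alg_act_def algebra_simps sum.distrib)

lemma group_alg_act_coeff_diff:
  "group_alg_act G m \<rho> (\<lambda>y. \<beta> y - \<gamma> y) w = (\<lambda>i. group_alg_act G m \<rho> \<beta> w i - group_alg_act G m \<rho> \<gamma> w i)"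
  by (simp add: group_alg_act_def algebra_simps sum_subtractf)

lemma group_alg_act_in_invariant_subspace:
  assumes X: "invariant_subspace G m \<rho> X" and v: "v \<in> X"
  shows "group_alg_act G m \<rho> \<beta> v \<in> X"
  unfolding group_alg_act_def
  by (rule csubspace_sum[OF invariant_subspace_csubspace[OF X]])
     (intro csubspace_scale[OF invariant_subspace_csubspace[OF X]] invariant_subspace_mat_vec[OF X _ v])

lemma group_alg_act_compress:
  assumes X: "invariant_subspace G m \<rho> X" and B: "onb m X d u"
    and v: "v \<in> X" and nz: "group_alg_act G m \<rho> \<beta> v \<noteq> (\<lambda>_. 0)"
  shows "\<exists>c. is_vec d c \<and> group_alg_act G d (compress m \<rho> d u) \<beta> c \<noteq> (\<lambda>_. 0)"
proof -
  have expand: "\<And>v. v \<in> X \<Longrightarrow> proj m d u v = v" using B by (simp add: onb_def)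
  define c where "c = (\<lambda>j. if j < d then cinner m (u j) v else 0)"
  have coords: "group_alg_act G d (compress m \<rho> d u) \<beta> c i = cinner m (u i) (group_alg_act G m \<rho> \<beta> v)"
    if i: "i < d" for i
  proof -
    have "group_alg_act G d (compress m \<rho> d u) \<beta> c i =
        (\<Sum>y\<in>carrier G. \<beta> y * cinner m (u i) (mat_vec m (\<rho> y) (proj m d u v)))"
      unfolding proj_def mat_vec_sum mat_vec_scale cinner_sum_right cinner_scale_right
      using i by (simp add: group_alg_act_def mat_vec_def compress_def c_def mult.commute)
    also have "\<dots> = cinner m (u i) (group_alg_act G m \<rho> \<beta> v)"
      using expand[OF v] by (simp add: group_alg_act_def cinner_sum_right cinner_scale_right)
    finally show ?thesis .
  qed
  have "\<exists>i<d. cinner m (u i) (group_alg_act G m \<rho> \<beta> v) \<noteq> 0"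
  proof (rule ccontr)
    assume "\<not> ?thesis"
    then have "proj m d u (group_alg_act G m \<rho> \<beta> v) = (\<lambda>_. 0)" by (simp add: proj_def)
    then show False
      using expand[OF group_alg_act_in_invariant_subspace[OF X v]] nz by simp
  qed
  moreover have "is_vec d c" by (simp add: c_def is_vec_def)
  ultimately show ?thesis using coords by metis
qed

lemma smaller_rep_with_nonzero_action:
  assumes G: "group G" and U: "unitary_rep G m \<rho>"
    and X: "invariant_subspace G m \<rho> X" and X_proper: "X \<noteq> {v. is_vec m v}"
    and x: "x \<in> X" and nz: "group_alg_act G m \<rho> \<beta> x \<noteq> (\<lambda>_. 0)"
  shows "\<exists>d \<sigma> c. d < m \<and> unitary_rep G d \<sigma> \<and> is_vec d c \<and> group_alg_act G d \<sigma> \<beta> c \<noteq> (\<lambda>_. 0)"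
proof -
  obtain d u where B: "onb m X d u" and "X \<noteq> {v. is_vec m v} \<longrightarrow> d < m"
    using onb_exists[OF invariant_subspace_csubspace[OF X]] by blast
  then show ?thesis
    using X_proper unitary_rep_compress[OF G U X B] group_alg_act_compress[OF X B x nz] by blast
qed

lemma irreducible_rep_with_nonzero_action:
  assumes G: "group G"
  shows "unitary_rep G m \<rho> \<Longrightarrow> is_vec m v \<Longrightarrow> group_alg_act G m \<rho> \<beta> v \<noteq> (\<lambda>_. 0) \<Longrightarrow>
    \<exists>m' \<sigma> w. irreducible_unitary_rep G m' \<sigma> \<and> is_vec m' w \<and> group_alg_act G m' \<sigma> \<beta> w \<noteq> (\<lambda>_. 0)"
proof (induction m arbitrary: \<rho> v rule: less_induct)
  case (less m)
  note U = less.prems(1) and v = less.prems(2) and nz = less.prems(3)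
  show ?case
  proof (cases "irreducible_unitary_rep G m \<rho>")
    case True
    then show ?thesis using v nz by blast
  next
    case False
    have "m \<noteq> 0" using nz by (auto simp: group_alg_act_def)
    with False U obtain W where W: "invariant_subspace G m \<rho> W" and W_nz: "W \<noteq> {\<lambda>_. 0}"
      and W_proper: "W \<noteq> {v. is_vec m v}"
      unfolding irreducible_unitary_rep_def by auto
    have W_sub: "csubspace m W" by (rule invariant_subspace_csubspace[OF W])
    obtain d u where B: "onb m W d u" using onb_exists[OF W_sub] by blast
    define p where "p = proj m d u v"
    define q where "q = (\<lambda>t. v t - p t)"
    have "p \<in> W" unfolding p_def using B by (intro proj_in_csubspace[OF W_sub]) (simp add: onb_def)
    moreover have "q \<in> orth_compl m W"
      unfolding q_def p_def by (rule residual_in_orth_compl[OF W_sub B v])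
    moreover have "group_alg_act G m \<rho> \<beta> p \<noteq> (\<lambda>_. 0) \<or> group_alg_act G m \<rho> \<beta> q \<noteq> (\<lambda>_. 0)"
      using nz group_alg_act_add[of G m \<rho> \<beta> p q] by (auto simp: q_def)
    ultimately obtain d' \<sigma> c where "d' < m" "unitary_rep G d' \<sigma>" "is_vec d' c"
      "group_alg_act G d' \<sigma> \<beta> c \<noteq> (\<lambda>_. 0)"
      using smaller_rep_with_nonzero_action[OF G U W W_proper]
        smaller_rep_with_nonzero_action[OF G U invariant_subspace_orth_compl[OF G U W]
          orth_compl_proper[OF W_sub W_nz]]
      by blast
    then show ?thesis using less.IH by blast
  qed
qed

section \<open>Fourier injectivity\<close>

definition regular_rep :: "('a, 'b) monoid_scheme \<Rightarrow> nat \<Rightarrow> (nat \<Rightarrow> 'a) \<Rightarrow> 'a \<Rightarrow> nat \<Rightarrow> nat \<Rightarrow> complex" where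
  "regular_rep G N f y i j = (if i < N \<and> j < N \<and> f i = y \<otimes>\<^bsub>G\<^esub> f j then 1 else 0)"

context
  fixes G :: "('a, 'b) monoid_scheme" (structure) and N :: nat and f :: "nat \<Rightarrow> 'a"
  assumes G: "group G" and f: "bij_betw f {..<N} (carrier G)"
begin

interpretation group G by (rule G)

lemma enum_in_carrier: "k < N \<Longrightarrow> f k \<in> carrier G"
  using f by (auto simp: bij_betw_def)

lemma enum_inv: "a \<in> carrier G \<Longrightarrow> the_inv_into {..<N} f a < N \<and> f (the_inv_into {..<N} f a) = a"
  using f by (metis bij_betw_def f_the_inv_into_f lessThan_iff the_inv_into_into order_refl)

lemma enum_inj: "i < N \<Longrightarrow> j < N \<Longrightarrow> f i = f j \<longleftrightarrow> i = j"
  using f by (auto simp: bij_betw_def inj_on_def)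

lemma enum_eq_iff: "k < N \<Longrightarrow> a \<in> carrier G \<Longrightarrow> f k = a \<longleftrightarrow> k = the_inv_into {..<N} f a"
  using f enum_inv by (metis bij_betw_def inj_on_def lessThan_iff)

lemma sum_enum_delta:
  "a \<in> carrier G \<Longrightarrow> (\<Sum>k<N. if f k = a then F k else 0) = F (the_inv_into {..<N} f a)"
  using enum_inv[of a] by (simp add: enum_eq_iff cong: if_cong)

lemma regular_rep_mult:
  assumes y: "y \<in> carrier G" and z: "z \<in> carrier G"
  shows "regular_rep G N f (y \<otimes> z) = mat_mul N (regular_rep G N f y) (regular_rep G N f z)"
proof (intro ext)
  fix i j
  let ?R = "regular_rep G N f"
  show "?R (y \<otimes> z) i j = mat_mul N (?R y) (?R z) i j"
  proof (cases "i < N \<and> j < N")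
    case True
    have "mat_mul N (?R y) (?R z) i j = (\<Sum>k<N. if f k = z \<otimes> f j then (if f i = y \<otimes> f k then 1 else 0) else 0)"
      using True by (simp add: mat_mul_def regular_rep_def) (rule sum.cong, auto)
    also have "\<dots> = ?R (y \<otimes> z) i j"
      using True enum_in_carrier y z enum_inv[of "z \<otimes> f j"]
      by (simp add: sum_enum_delta regular_rep_def m_assoc)
    finally show ?thesis by simp
  qed (auto simp: regular_rep_def mat_mul_def)
qed

lemma adj_mat_regular_rep:
  assumes y: "y \<in> carrier G"
  shows "adj_mat N (regular_rep G N f y) = regular_rep G N f (inv y)"
proof (intro ext)
  fix i j
  show "adj_mat N (regular_rep G N f y) i j = regular_rep G N f (inv y) i j"
  proof (cases "i < N \<and> j < N")
    case True
    then have "f j = y \<otimes> f i \<longleftrightarrow> f i = inv y \<otimes> f j"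
      using enum_in_carrier y by (metis inv_closed l_inv m_assoc r_inv l_one m_closed)
    then show ?thesis using True by (simp add: adj_mat_def regular_rep_def)
  qed (auto simp: adj_mat_def regular_rep_def)
qed

lemma unitary_rep_regular_rep: "unitary_rep G N (regular_rep G N f)"
proof -
  have one: "regular_rep G N f \<one> = id_mat N"
    by (intro ext) (auto simp: regular_rep_def id_mat_def enum_in_carrier enum_inj)
  then have "mat_mul N (regular_rep G N f y) (adj_mat N (regular_rep G N f y)) = id_mat N"
    if "y \<in> carrier G" for y
    using that by (simp add: adj_mat_regular_rep regular_rep_mult[symmetric])
  then show ?thesis
    unfolding unitary_rep_def using regular_rep_mult one by (auto simp: is_mat_def regular_rep_def)
qed

lemma group_alg_act_regular_rep:
  assumes t: "t \<in> carrier G"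
  shows "group_alg_act G N (regular_rep G N f) \<beta> (\<lambda>j. if j = the_inv_into {..<N} f \<one> then 1 else 0)
           (the_inv_into {..<N} f t) = \<beta> t"
proof -
  have "mat_vec N (regular_rep G N f y) (\<lambda>j. if j = the_inv_into {..<N} f \<one> then 1 else 0)
          (the_inv_into {..<N} f t) = (if y = t then 1 else 0)"
    if "y \<in> carrier G" for y
    using enum_inv[OF t] enum_inv[OF one_closed] that t
    by (auto simp: mat_vec_def regular_rep_def if_distrib[of "\<lambda>x. _ * x"] cong: if_cong)
  moreover have "finite (carrier G)" using bij_betw_finite f by blast
  ultimately show ?thesis
    using t by (simp add: group_alg_act_def if_distrib[of "\<lambda>x. _ * x"] cong: if_cong)
qed

end

theorem fourier_injective:
  fixes G (structure)
  assumes G: "group G" and fin: "finite (carrier G)"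
    and vanish: "\<And>m \<sigma> w. irreducible_unitary_rep G m \<sigma> \<Longrightarrow> is_vec m w \<Longrightarrow>
                   group_alg_act G m \<sigma> \<beta> w = (\<lambda>_. 0)"
    and t: "t \<in> carrier G"
  shows "\<beta> t = 0"
proof (rule ccontr)
  interpret group G by (rule G)
  assume "\<beta> t \<noteq> 0"
  obtain f where f: "bij_betw f {..<card (carrier G)} (carrier G)" (is "bij_betw f {..<?N} _")
    using ex_bij_betw_nat_finite[OF fin] by (auto simp: atLeast0LessThan)
  let ?v = "\<lambda>j. if j = the_inv_into {..<?N} f \<one> then 1 else (0::complex)"
  have "group_alg_act G ?N (regular_rep G ?N f) \<beta> ?v \<noteq> (\<lambda>_. 0)"
    using group_alg_act_regular_rep[OF G f t] \<open>\<beta> t \<noteq> 0\<close> by metis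
  moreover have "is_vec ?N ?v"
    using enum_inv[OF G f one_closed] by (simp add: is_vec_def)
  ultimately show False
    using irreducible_rep_with_nonzero_action[OF G unitary_rep_regular_rep[OF G f]] vanish by blast
qed

section \<open>Quadratic forms that are locally constant on the unit sphere\<close>

lemma quadratic_eventually_0_imp_coeffs_0:
  fixes a b c :: complex
  assumes "\<forall>\<^sub>F t in at (0::real). a + of_real t * b + (of_real t)\<^sup>2 * c = 0"
  shows "a = 0 \<and> b = 0 \<and> c = 0"
proof -
  obtain d where "d > 0" and zero: "\<And>t::real. t \<noteq> 0 \<Longrightarrow> dist t 0 < d \<Longrightarrow> poly [:a, b, c:] (of_real t) = 0"
    using assms unfolding eventually_at by (auto simp: algebra_simps power2_eq_square)
  then have "of_real ` {0<..<d} \<subseteq> {z. poly [:a, b, c:] z = 0}" by auto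
  moreover have "infinite (of_real ` {0<..<d} :: complex set)"
    using \<open>d > 0\<close> by (auto simp: finite_image_iff inj_on_def)
  ultimately have "[:a, b, c:] = 0" using poly_roots_finite finite_subset by blast
  then show ?thesis by simp
qed

lemma quadratic_form_line:
  "cinner n (\<lambda>i. x i + of_real t * v i) (mat_vec n A (\<lambda>i. x i + of_real t * v i)) =
   cinner n x (mat_vec n A x) + of_real t * (cinner n x (mat_vec n A v) + cinner n v (mat_vec n A x))
   + (of_real t)\<^sup>2 * cinner n v (mat_vec n A v)"
  by (simp only: mat_vec_add mat_vec_scale cinner_add_right cinner_scale_right cinner_add_left
      cinner_scale_left complex_cnj_complex_of_real) (simp add: algebra_simps power2_eq_square)

lemma quadratic_form_scale:
  "cinner n (\<lambda>i. c * y i) (mat_vec n A (\<lambda>i. c * y i)) = cnj c * c * cinner n y (mat_vec n A y)"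
  by (simp add: mat_vec_scale cinner_scale_left cinner_scale_right)

lemma eventually_normalize_vec_line_in_open:
  fixes x v :: "nat \<Rightarrow> complex"
  assumes S: "open S" "x \<in> S" and x: "(\<Sum>i<m. (cmod (x i))\<^sup>2) = 1"
  defines "L \<equiv> \<lambda>t::real. \<lambda>i. x i + of_real t * v i"
  shows "\<forall>\<^sub>F t in at 0. (\<Sum>i<m. (cmod (L t i))\<^sup>2) \<noteq> 0 \<and> normalize_vec m (L t) \<in> S"
proof -
  define N where "N t = (\<Sum>i<m. (cmod (L t i))\<^sup>2)" for t
  define U where "U = {t. N t \<noteq> 0}"
  have N_cont: "continuous_on UNIV N" unfolding N_def L_def by (intro continuous_intros)
  have "N 0 = 1" using x by (simp add: N_def L_def)
  then have U: "open U" "0 \<in> U"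
    using N_cont by (auto simp: U_def intro: open_Collect_neq continuous_intros)
  have "continuous_on U (\<lambda>t. normalize_vec m (L t))"
    unfolding normalize_vec_def N_def[symmetric] unfolding L_def
    by (intro continuous_intros continuous_on_subset[OF N_cont]) (auto simp: U_def)
  then have "((\<lambda>t. normalize_vec m (L t)) \<longlongrightarrow> normalize_vec m (L 0)) (at 0)"
    using U continuous_on_eq_continuous_at isCont_def by blast
  moreover have "normalize_vec m (L 0) = x"
    using x by (simp add: normalize_vec_def L_def)
  ultimately have "\<forall>\<^sub>F t in at 0. normalize_vec m (L t) \<in> S"
    using S topological_tendstoD by fastforce
  moreover have "\<forall>\<^sub>F t in at 0. t \<in> U"
    using U eventually_at_topological by blast
  ultimately show ?thesis by eventually_elim (simp add: U_def N_def)
qed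

lemma mat_vec_minus_scalar:
  assumes "is_vec m v"
  shows "mat_vec m (\<lambda>i j. A i j - c * id_mat m i j) v = (\<lambda>i. mat_vec m A v i - c * v i)"
  using assms by (simp add: mat_vec_mat_diff mat_vec_mat_scale mat_vec_id_mat)

lemma quadratic_form_eq_0_if_eq_0_near_sphere_point:
  assumes S: "open S" "x \<in> S" and x: "is_vec m x" "(\<Sum>i<m. (cmod (x i))\<^sup>2) = 1"
    and vanish: "\<And>y. y \<in> S \<Longrightarrow> is_vec m y \<Longrightarrow> (\<Sum>i<m. (cmod (y i))\<^sup>2) = 1 \<Longrightarrow>
                   cinner m y (mat_vec m B y) = 0"
    and w: "is_vec m w"
  shows "cinner m w (mat_vec m B w) = 0"
proof -
  \<comment> \<open>By homogeneity the form vanishes on \<open>x + t w\<close> for small \<open>t\<close>; its value at \<open>w\<close> is the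
      coefficient of \<open>t\<^sup>2\<close>.\<close>
  define L where "L t = (\<lambda>i. x i + of_real t * w i)" for t :: real
  have L_vec: "is_vec m (L t)" for t using x(1) w by (simp add: L_def is_vec_def)
  have "\<forall>\<^sub>F t in at 0. (\<Sum>i<m. (cmod (L t i))\<^sup>2) \<noteq> 0 \<and> normalize_vec m (L t) \<in> S"
    using eventually_normalize_vec_line_in_open[OF S x(2), of w] by (simp add: L_def)
  then have "\<forall>\<^sub>F t in at 0. cinner m (L t) (mat_vec m B (L t)) = 0"
  proof eventually_elim
    case (elim t)
    define s where "s = 1 / sqrt (\<Sum>i<m. (cmod (L t i))\<^sup>2)"
    have s: "normalize_vec m (L t) = (\<lambda>i. of_real s * L t i)" "s \<noteq> 0"
      using elim by (simp_all add: s_def normalize_vec_def)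
    have "(\<Sum>i<m. (cmod (normalize_vec m (L t) i))\<^sup>2) = 1"
      using elim by (intro sum_cmod_sq_normalize_vec) simp
    moreover have "is_vec m (normalize_vec m (L t))"
      using L_vec by (simp add: normalize_vec_def is_vec_def)
    ultimately have "cinner m (normalize_vec m (L t)) (mat_vec m B (normalize_vec m (L t))) = 0"
      using vanish elim by simp
    then show ?case using s by (simp add: quadratic_form_scale)
  qed
  then have "\<forall>\<^sub>F t in at (0::real). cinner m x (mat_vec m B x)
      + of_real t * (cinner m x (mat_vec m B w) + cinner m w (mat_vec m B x))
      + (of_real t)\<^sup>2 * cinner m w (mat_vec m B w) = 0"
    by (simp add: L_def quadratic_form_line)
  then show ?thesis using quadratic_eventually_0_imp_coeffs_0 by blast
qed

lemma scalar_if_quadratic_form_locally_constant: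
  assumes S: "open S" "x \<in> S" and x: "is_vec m x" "(\<Sum>i<m. (cmod (x i))\<^sup>2) = 1"
    and const: "\<And>y. y \<in> S \<Longrightarrow> is_vec m y \<Longrightarrow> (\<Sum>i<m. (cmod (y i))\<^sup>2) = 1 \<Longrightarrow>
                  cinner m y (mat_vec m A y) = c"
    and v: "is_vec m v"
  shows "mat_vec m A v = (\<lambda>i. c * v i)"
proof -
  define B where "B = (\<lambda>i j. A i j - c * id_mat m i j)"
  have "cinner m y (mat_vec m B y) = cinner m y (mat_vec m A y) - c * cinner m y y"
    if "is_vec m y" for y
    using that by (simp add: B_def mat_vec_minus_scalar cinner_diff_right cinner_scale_right)
  then have "cinner m y (mat_vec m B y) = 0"
    if "y \<in> S" "is_vec m y" "(\<Sum>i<m. (cmod (y i))\<^sup>2) = 1" for y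
    using that const by (simp only: cinner_self of_real_1 mult_1_right diff_self)
  then have "cinner m w (mat_vec m B w) = 0" if "is_vec m w" for w
    using quadratic_form_eq_0_if_eq_0_near_sphere_point[OF S x _ that] by blast
  then have "mat_vec m B v = (\<lambda>_. 0)" by (rule mat_vec_eq_0_if_quadratic_form_eq_0[OF _ v])
  then show ?thesis using v by (simp add: B_def mat_vec_minus_scalar fun_eq_iff)
qed

section \<open>The coincidence sets\<close>

lemma sphere_prod_fun_upd:
  assumes "\<xi> \<in> sphere_prod l n" "k < l" "is_vec (n k) y" "(\<Sum>i<n k. (cmod (y i))\<^sup>2) = 1"
  shows "\<xi>(k := y) \<in> sphere_prod l n"
  using assms by (auto simp: sphere_prod_def)

lemma T_xi_diff:
  "T_xi l n \<alpha> \<xi> g - T_xi l n \<alpha> \<xi> h =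
   (\<Sum>k<l. cinner (n k) (\<xi> k) (mat_vec (n k) (\<lambda>i j. \<alpha> k g i j - \<alpha> k h i j) (\<xi> k)))"
  unfolding T_xi_def by (simp add: mat_vec_mat_diff cinner_diff_right sum_subtractf)

lemma continuous_on_T_xi: "continuous_on UNIV (\<lambda>\<xi>. T_xi l n \<alpha> \<xi> g)"
proof -
  have "continuous_on UNIV (\<lambda>\<xi>::nat \<Rightarrow> nat \<Rightarrow> complex. \<xi> k i)" for k i
    using continuous_on_product_then_coordinatewise[OF continuous_on_product_coordinates] .
  moreover have "T_xi l n \<alpha> \<xi> g = (\<Sum>k<l. \<Sum>i<n k. cnj (\<xi> k i) * (\<Sum>j<n k. \<alpha> k g i j * \<xi> k j))" for \<xi>
    unfolding T_xi_def cinner_def mat_vec_def by (intro sum.cong refl) auto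
  ultimately show ?thesis by (simp only:) (intro continuous_intros)
qed

lemma closedin_V_set: "closedin (top_of_set (sphere_prod l n)) (V_set l n \<alpha> g h)"
proof -
  have "closed {\<xi>. T_xi l n \<alpha> \<xi> g = T_xi l n \<alpha> \<xi> h}"
    by (intro closed_Collect_eq continuous_on_T_xi)
  moreover have "V_set l n \<alpha> g h = sphere_prod l n \<inter> {\<xi>. T_xi l n \<alpha> \<xi> g = T_xi l n \<alpha> \<xi> h}"
    by (auto simp: V_set_def)
  ultimately show ?thesis by (auto simp: closedin_closed)
qed

lemma interior_point_if_not_nowhere_dense:
  assumes "closedin (top_of_set S) V" "\<not> nowhere_dense_in S V"
  obtains U x where "open U" "x \<in> U" "x \<in> S" "S \<inter> U \<subseteq> V"
proof -
  have "(top_of_set S) closure_of V = V" using assms(1) by (simp add: closure_of_eq)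
  then obtain x where "x \<in> (top_of_set S) interior_of V"
    using assms(2) by (auto simp: nowhere_dense_in_def)
  then obtain U' where "openin (top_of_set S) U'" "x \<in> U'" "U' \<subseteq> V"
    unfolding interior_of_def by blast
  then show ?thesis using that unfolding openin_open by blast
qed

lemma open_vimage_fun_upd:
  fixes f :: "'a \<Rightarrow> 'b::topological_space"
  assumes "open U"
  shows "open ((\<lambda>y. f(k := y)) -` U)"
proof -
  have "continuous_on UNIV (\<lambda>y. f(k := y))"
  proof (rule continuous_on_coordinatewise_then_product)
    show "continuous_on UNIV (\<lambda>y. (f(k := y)) j)" for j by (cases "j = k") simp_all
  qed
  with assms show ?thesis by (rule open_vimage)
qed

lemma scalar_difference_if_interior_point:
  assumes U: "open U" "\<xi>0 \<in> U" "\<xi>0 \<in> sphere_prod l n" "sphere_prod l n \<inter> U \<subseteq> V_set l n \<alpha> g h"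
    and k: "k < l"
  obtains c where "\<And>v. is_vec (n k) v \<Longrightarrow> mat_vec (n k) (\<lambda>i j. \<alpha> k g i j - \<alpha> k h i j) v = (\<lambda>i. c * v i)"
proof -
  define Q where "Q j w = cinner (n j) w (mat_vec (n j) (\<lambda>i i'. \<alpha> j g i i' - \<alpha> j h i i') w)" for j w
  have sum_Q: "(\<Sum>j<l. Q j (\<xi> j)) = 0" if "\<xi> \<in> sphere_prod l n" "\<xi> \<in> U" for \<xi>
    using that U(4) T_xi_diff[of l n \<alpha> \<xi> g h] by (auto simp: V_set_def Q_def)
  have Q_split: "(\<Sum>j<l. Q j (\<xi> j)) = Q k (\<xi> k) + (\<Sum>j\<in>{..<l} - {k}. Q j (\<xi>0 j))"
    if "\<forall>j\<noteq>k. \<xi> j = \<xi>0 j" for \<xi>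
  proof -
    have "(\<Sum>j<l. Q j (\<xi> j)) = Q k (\<xi> k) + (\<Sum>j\<in>{..<l} - {k}. Q j (\<xi> j))"
      using k by (simp add: sum.remove)
    also have "(\<Sum>j\<in>{..<l} - {k}. Q j (\<xi> j)) = (\<Sum>j\<in>{..<l} - {k}. Q j (\<xi>0 j))"
      using that by (intro sum.cong) auto
    finally show ?thesis .
  qed
  define S where "S = (\<lambda>y. \<xi>0(k := y)) -` U"
  have "open S" unfolding S_def using U(1) by (rule open_vimage_fun_upd)
  moreover have "\<xi>0 k \<in> S" using U(2) by (simp add: S_def)
  moreover have "is_vec (n k) (\<xi>0 k)" "(\<Sum>i<n k. (cmod (\<xi>0 k i))\<^sup>2) = 1"
    using U(3) k by (auto simp: sphere_prod_def)
  moreover have "Q k y = Q k (\<xi>0 k)"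
    if "y \<in> S" "is_vec (n k) y" "(\<Sum>i<n k. (cmod (y i))\<^sup>2) = 1" for y
  proof -
    have "Q k y + (\<Sum>j\<in>{..<l} - {k}. Q j (\<xi>0 j)) = 0"
      using sum_Q[OF sphere_prod_fun_upd[OF U(3) k that(2,3)]] that(1) Q_split[of "\<xi>0(k := y)"]
      by (simp add: S_def)
    moreover have "Q k (\<xi>0 k) + (\<Sum>j\<in>{..<l} - {k}. Q j (\<xi>0 j)) = 0"
      using sum_Q[OF U(3,2)] Q_split[of \<xi>0] by simp
    ultimately show ?thesis by (metis add_right_cancel)
  qed
  ultimately show ?thesis
    using that scalar_if_quadratic_form_locally_constant[of S "\<xi>0 k" "n k"] unfolding Q_def by blast
qed

section \<open>Centrality\<close>

lemma central_if_differences_commute: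
  fixes G (structure)
  assumes G: "group G" and fin: "finite (carrier G)"
    and g: "g \<in> carrier G" and h: "h \<in> carrier G" and "g \<noteq> h"
    and commute: "\<And>m \<sigma> x w. irreducible_unitary_rep G m \<sigma> \<Longrightarrow> x \<in> carrier G \<Longrightarrow> is_vec m w \<Longrightarrow>
        mat_vec m (\<sigma> x) (mat_vec m (\<lambda>i j. \<sigma> g i j - \<sigma> h i j) w) =
        mat_vec m (\<lambda>i j. \<sigma> g i j - \<sigma> h i j) (mat_vec m (\<sigma> x) w)"
  shows "central G g \<and> central G h"
proof -
  interpret group G by (rule G)
  have "x \<otimes> g = g \<otimes> x \<and> h \<otimes> x = x \<otimes> h" if x: "x \<in> carrier G" for x
  proof -
    define \<beta> where "\<beta> = (\<lambda>y. (if y = x \<otimes> g then 1 else 0) - (if y = x \<otimes> h then 1 else 0)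
       - (if y = g \<otimes> x then 1 else 0) + (if y = h \<otimes> x then (1::complex) else 0))"
    have "group_alg_act G m \<sigma> \<beta> w = (\<lambda>_. 0)"
      if \<sigma>: "irreducible_unitary_rep G m \<sigma>" and w: "is_vec m w" for m \<sigma> w
    proof -
      have U: "unitary_rep G m \<sigma>" using \<sigma> by (simp add: irreducible_unitary_rep_def)
      show ?thesis
        using commute[OF \<sigma> x w] unfolding \<beta>_def
        by (simp only: group_alg_act_coeff_add group_alg_act_coeff_diff group_alg_act_indicator[OF fin]
            m_closed x g h unitary_rep_mult[OF U] mat_vec_mat_diff mat_vec_diff)
           (simp add: fun_eq_iff algebra_simps)
    qed
    then have \<beta>0: "\<beta> t = 0" if "t \<in> carrier G" for t
      using fourier_injective[OF G fin _ that] by blast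
    have "x \<otimes> g \<noteq> x \<otimes> h" using \<open>g \<noteq> h\<close> x g h by simp
    then have xg: "x \<otimes> g = g \<otimes> x"
      using \<beta>0[of "x \<otimes> g"] x g by (auto simp: \<beta>_def split: if_splits)
    then show ?thesis
      using \<beta>0[of "h \<otimes> x"] x h by (auto simp: \<beta>_def split: if_splits)
  qed
  then show ?thesis using g h by (auto simp: central_def)
qed

lemma scalar_difference_transfer:
  assumes eqv: "equivalent_reps G m \<sigma> n \<alpha>" and g: "g \<in> carrier G" and h: "h \<in> carrier G"
    and scalar: "\<And>v. is_vec n v \<Longrightarrow> mat_vec n (\<lambda>i j. \<alpha> g i j - \<alpha> h i j) v = (\<lambda>i. c * v i)"
    and w: "is_vec m w"
  shows "mat_vec m (\<lambda>i j. \<sigma> g i j - \<sigma> h i j) w = (\<lambda>i. c * w i)"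
proof -
  obtain P Q where "m = n" and QP: "mat_mul m Q P = id_mat m"
    and intertwine: "\<And>y. y \<in> carrier G \<Longrightarrow> mat_mul m P (\<sigma> y) = mat_mul m (\<alpha> y) P"
    using eqv unfolding equivalent_reps_def by auto
  have P_\<sigma>: "mat_vec m P (mat_vec m (\<sigma> y) u) = mat_vec m (\<alpha> y) (mat_vec m P u)" if "y \<in> carrier G" for y u
    using intertwine[OF that] by (metis mat_vec_mat_mul)
  have scalar_m: "mat_vec m (\<lambda>i j. \<alpha> g i j - \<alpha> h i j) v = (\<lambda>i. c * v i)" if "is_vec m v" for v
    using scalar that \<open>m = n\<close> by simp
  let ?D = "mat_vec m (\<lambda>i j. \<sigma> g i j - \<sigma> h i j) w"
  have "mat_vec m P ?D = (\<lambda>i. c * mat_vec m P w i)"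
    using scalar_m[of "mat_vec m P w"] by (simp add: mat_vec_mat_diff mat_vec_diff P_\<sigma> g h)
  moreover have Q_P: "mat_vec m Q (mat_vec m P u) = u" if "is_vec m u" for u
    using QP that by (metis mat_vec_mat_mul mat_vec_id_mat)
  ultimately have "?D = mat_vec m Q (\<lambda>i. c * mat_vec m P w i)"
    by (metis is_vec_mat_vec)
  then show ?thesis using Q_P[OF w] by (simp add: mat_vec_scale)
qed

lemma mat_vec_dim_1_commute: "mat_vec 1 A (mat_vec 1 B w) = mat_vec 1 B (mat_vec 1 A w)"
  by (auto simp: mat_vec_def fun_eq_iff)

lemma irreducible_difference_commutes:
  assumes complete: "\<forall>m \<rho>. irreducible_unitary_rep G m \<rho> \<and> 1 < m \<longrightarrow>
                        (\<exists>k<l. equivalent_reps G m \<rho> (n k) (\<alpha> k))"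
    and scalar: "\<forall>k<l. \<exists>c. \<forall>v. is_vec (n k) v \<longrightarrow>
                   mat_vec (n k) (\<lambda>i j. \<alpha> k g i j - \<alpha> k h i j) v = (\<lambda>i. c * v i)"
    and \<sigma>: "irreducible_unitary_rep G m \<sigma>" and g: "g \<in> carrier G" and h: "h \<in> carrier G"
    and w: "is_vec m w"
  shows "mat_vec m (\<sigma> x) (mat_vec m (\<lambda>i j. \<sigma> g i j - \<sigma> h i j) w) =
         mat_vec m (\<lambda>i j. \<sigma> g i j - \<sigma> h i j) (mat_vec m (\<sigma> x) w)"
proof (cases "m = 1")
  case True
  show ?thesis unfolding True by (rule mat_vec_dim_1_commute)
next
  case False
  with \<sigma> have "1 < m" by (auto simp: irreducible_unitary_rep_def)
  with \<sigma> complete obtain k where "k < l" and "equivalent_reps G m \<sigma> (n k) (\<alpha> k)"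
    by blast
  moreover obtain c where "\<forall>v. is_vec (n k) v \<longrightarrow>
      mat_vec (n k) (\<lambda>i j. \<alpha> k g i j - \<alpha> k h i j) v = (\<lambda>i. c * v i)"
    using scalar \<open>k < l\<close> by blast
  ultimately have "mat_vec m (\<lambda>i j. \<sigma> g i j - \<sigma> h i j) u = (\<lambda>i. c * u i)" if "is_vec m u" for u
    using scalar_difference_transfer[OF _ g h _ that] by blast
  then show ?thesis using w by (simp add: mat_vec_scale)
qed

theorem proposition6p2:
  fixes G :: "('a, 'b) monoid_scheme" (structure)
    and l :: nat and n :: "nat \<Rightarrow> nat"
    and \<alpha> :: "nat \<Rightarrow> 'a \<Rightarrow> nat \<Rightarrow> nat \<Rightarrow> complex"
    and g h :: 'a
  assumes "group G" and "finite (carrier G)"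
    and irr: "\<forall>k<l. irreducible_unitary_rep G (n k) (\<alpha> k) \<and> 1 < n k"
    and inequiv: "\<forall>k<l. \<forall>k'<l. k \<noteq> k' \<longrightarrow> \<not> equivalent_reps G (n k) (\<alpha> k) (n k') (\<alpha> k')"
    and complete: "\<forall>(m::nat) (\<rho>::'a \<Rightarrow> nat \<Rightarrow> nat \<Rightarrow> complex).
                     irreducible_unitary_rep G m \<rho> \<and> 1 < m \<longrightarrow>
                     (\<exists>k<l. equivalent_reps G m \<rho> (n k) (\<alpha> k))"
    and "g \<in> carrier G" and "h \<in> carrier G" and "g \<noteq> h"
    and "\<not> central G g \<or> \<not> central G h"
  shows "nowhere_dense_in (sphere_prod l n) (V_set l n \<alpha> g h)"
proof (rule ccontr)
  assume "\<not> ?thesis"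
  then obtain U \<xi>0 where U: "open U" "\<xi>0 \<in> U" "\<xi>0 \<in> sphere_prod l n"
    "sphere_prod l n \<inter> U \<subseteq> V_set l n \<alpha> g h"
    using interior_point_if_not_nowhere_dense[OF closedin_V_set] by metis
  have "\<forall>k<l. \<exists>c. \<forall>v. is_vec (n k) v \<longrightarrow>
      mat_vec (n k) (\<lambda>i j. \<alpha> k g i j - \<alpha> k h i j) v = (\<lambda>i. c * v i)"
    using scalar_difference_if_interior_point[OF U] by metis
  then have "central G g \<and> central G h"
    using central_if_differences_commute[OF assms(1,2,6-8)]
      irreducible_difference_commutes[OF complete] assms(6,7) by blast
  with assms(9) show False by blast
qed

end
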